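(* Let $(X,d_X)$ be a discrete countable metric space. Then $X$ is bounded (has finite diameter) if and only if the uniform Roe algebra $C^*_u(X)$ is monotone complete.
   Context: $H_X=\ell^2(X)$ with orthonormal basis $\{\delta_x\}$; a bounded operator $T$ on $H_X$ has propagation at most $L$ if $d_X(x,y)\ge L$ implies $(\delta_x,T\delta_y)=0$. $C^*_u(X)$ is the norm closure in $\mathbb B(H_X)$ of the bounded operators of finite propagation. A $C^*$-algebra $A$ is monotone complete if every bounded increasing net of self-adjoint elements of $A$ has a least upper bound in $A$ (with respect to the order of self-adjoint elements of $A$). *)

theory Defs
  imports "HOL-Analysis.Analysis"
begin

text \<open>Vectors of H_X = l2(X) are represented as functions X \<Rightarrow> complex that are
  square-summable; (possibly nonlinear-looking) maps on all functions are used as operators,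
  but all conditions only look at their behaviour on l2(X).\<close>

type_synonym 'a vec = "'a \<Rightarrow> complex"
type_synonym 'a op = "'a vec \<Rightarrow> 'a vec"

definition ell2 :: "'a vec set" where
  "ell2 = {f. (\<lambda>x. (cmod (f x))^2) summable_on UNIV}"

definition l2norm :: "'a vec \<Rightarrow> real" where
  "l2norm f = sqrt (\<Sum>\<^sub>\<infinity>x. (cmod (f x))^2)"

definition l2inner :: "'a vec \<Rightarrow> 'a vec \<Rightarrow> complex" where
  "l2inner f g = (\<Sum>\<^sub>\<infinity>x. cnj (f x) * g x)"

definition delta :: "'a \<Rightarrow> 'a vec" where
  "delta x = (\<lambda>y. if y = x then 1 else 0)"

definition bounded_op :: "'a op \<Rightarrow> bool" where
  "bounded_op T \<longleftrightarrow>
     (\<forall>f\<in>ell2. T f \<in> ell2) \<and>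
     (\<forall>f\<in>ell2. \<forall>g\<in>ell2. \<forall>a b. T (\<lambda>x. a * f x + b * g x) = (\<lambda>x. a * T f x + b * T g x)) \<and>
     (\<exists>C. \<forall>f\<in>ell2. l2norm (T f) \<le> C * l2norm f)"

definition propagation_le :: "real \<Rightarrow> ('a::metric_space) op \<Rightarrow> bool" where
  "propagation_le L T \<longleftrightarrow>
     (\<forall>x y. dist x y \<ge> L \<longrightarrow> l2inner (delta x) (T (delta y)) = 0)"

definition finite_propagation :: "('a::metric_space) op \<Rightarrow> bool" where
  "finite_propagation T \<longleftrightarrow> bounded_op T \<and> (\<exists>L. propagation_le L T)"

definition uniform_roe :: "('a::metric_space) op set" where
  "uniform_roe = {T. bounded_op T \<and>
     (\<forall>\<epsilon>>0. \<exists>S. finite_propagation S \<and>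
        (\<forall>f\<in>ell2. l2norm (\<lambda>x. T f x - S f x) \<le> \<epsilon> * l2norm f))}"

definition self_adjoint_op :: "'a op \<Rightarrow> bool" where
  "self_adjoint_op T \<longleftrightarrow> bounded_op T \<and>
     (\<forall>f\<in>ell2. \<forall>g\<in>ell2. l2inner (T f) g = l2inner f (T g))"

definition op_le :: "'a op \<Rightarrow> 'a op \<Rightarrow> bool" where
  "op_le S T \<longleftrightarrow> (\<forall>f\<in>ell2. Im (l2inner f (\<lambda>x. T f x - S f x)) = 0 \<and>
                               Re (l2inner f (\<lambda>x. T f x - S f x)) \<ge> 0)"

text \<open>Index elements are taken of the operator
  type itself (large enough to reindex every net without changing its lubs).\<close>
definition monotone_complete :: "'a op set \<Rightarrow> bool" where
  "monotone_complete A \<longleftrightarrow>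
    (\<forall>(D :: 'a op set) (le :: 'a op \<Rightarrow> 'a op \<Rightarrow> bool) (N :: 'a op \<Rightarrow> 'a op).
      D \<noteq> {} \<and>
      (\<forall>i\<in>D. le i i) \<and>
      (\<forall>i\<in>D. \<forall>j\<in>D. \<forall>k\<in>D. le i j \<and> le j k \<longrightarrow> le i k) \<and>
      (\<forall>i\<in>D. \<forall>j\<in>D. \<exists>k\<in>D. le i k \<and> le j k) \<and>
      (\<forall>i\<in>D. N i \<in> A \<and> self_adjoint_op (N i)) \<and>
      (\<forall>i\<in>D. \<forall>j\<in>D. le i j \<longrightarrow> op_le (N i) (N j)) \<and>
      (\<exists>C. \<forall>i\<in>D. \<forall>f\<in>ell2. l2norm (N i f) \<le> C * l2norm f)
      \<longrightarrow>
      (\<exists>S\<in>A. self_adjoint_op S \<and> (\<forall>i\<in>D. op_le (N i) S) \<and>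
         (\<forall>U\<in>A. self_adjoint_op U \<and> (\<forall>i\<in>D. op_le (N i) U) \<longrightarrow> op_le S U)))"

end

theory Submission
  imports Defs
begin

text \<open>
  If X is bounded, every bounded operator on \<open>\<ell>\<^sup>2(X)\<close> has finite propagation, so the
  uniform Roe algebra is the whole algebra of bounded operators. There a bounded increasing net of
  self-adjoint operators has a supremum: its quadratic forms increase to a limit, and polarization
  turns these limits into the matrix entries of the weak-operator limit, which is the least upper
  bound.

  If X is unbounded, choose distinct points \<open>x\<^sub>n, y\<^sub>n\<close> with \<open>d(x\<^sub>n, y\<^sub>n) \<ge> n\<close>. Let \<open>P\<^sub>n\<close> be
  the projection onto \<open>\<delta>\<^sub>x\<^sub>n + \<delta>\<^sub>y\<^sub>n\<close> and \<open>P'\<^sub>k\<close> the one onto \<open>\<delta>\<^sub>x\<^sub>k - \<delta>\<^sub>y\<^sub>k\<close>. The partial sums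
  \<open>Q\<^sub>N = \<Sum>\<^sub>n\<^sub><\<^sub>N P\<^sub>n\<close> increase in the uniform Roe algebra and are all dominated by each
  \<open>U\<^sub>k = 1 - P'\<^sub>k\<close>, which also lies there. A least upper bound L in the uniform Roe algebra
  would satisfy \<open>Q\<^sub>k\<^sub>+\<^sub>1 \<le> L \<le> U\<^sub>k\<close>; since \<open>Q\<^sub>k\<^sub>+\<^sub>1\<close> and \<open>U\<^sub>k\<close> agree on the span of
  \<open>\<delta>\<^sub>x\<^sub>k, \<delta>\<^sub>y\<^sub>k\<close>, this forces \<open>\<langle>\<delta>\<^sub>x\<^sub>k, L \<delta>\<^sub>y\<^sub>k\<rangle> = 1/2\<close> for every k. But the matrix entries of an
  operator in the uniform Roe algebra become uniformly small far from the diagonal.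
\<close>

section \<open>The Hilbert space \<open>\<ell>\<^sup>2\<close>\<close>

lemma square_sum_le: "((a::real) + b)^2 \<le> 2 * a^2 + 2 * b^2"
  using sum_squares_bound[of a b] by (simp add: power2_sum)

lemma mult_le_weighted_squares:
  fixes a b d :: real
  assumes "d > 0"
  shows "a * b \<le> (a^2 / d + d * b^2) / 2"
proof -
  have "2 * a * (d * b) \<le> a^2 + (d * b)^2" by (rule sum_squares_bound)
  with assms show ?thesis by (simp add: field_simps power2_eq_square)
qed

lemma ell2_lincomb:
  assumes "f \<in> ell2" "g \<in> ell2"
  shows "(\<lambda>x. a * f x + b * g x) \<in> ell2"
proof -
  have bound: "(\<lambda>x. (2 * (cmod a)^2) * (cmod (f x))^2 + (2 * (cmod b)^2) * (cmod (g x))^2) summable_on UNIV"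
    using assms by (intro summable_on_add summable_on_cmult_right) (auto simp: ell2_def)
  have "(cmod (a * f x + b * g x))^2 \<le> (2 * (cmod a)^2) * (cmod (f x))^2 + (2 * (cmod b)^2) * (cmod (g x))^2" for x
  proof -
    have "cmod (a * f x + b * g x) \<le> cmod a * cmod (f x) + cmod b * cmod (g x)"
      by (metis norm_mult norm_triangle_ineq)
    then have "(cmod (a * f x + b * g x))^2 \<le> (cmod a * cmod (f x) + cmod b * cmod (g x))^2"
      by (simp add: power_mono)
    also have "\<dots> \<le> 2 * (cmod a * cmod (f x))^2 + 2 * (cmod b * cmod (g x))^2"
      by (rule square_sum_le)
    finally show ?thesis by (simp add: power_mult_distrib)
  qed
  then show ?thesis
    unfolding ell2_def by (auto intro!: summable_on_comparison_test[OF bound])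
qed

lemma ell2_diff: "f \<in> ell2 \<Longrightarrow> g \<in> ell2 \<Longrightarrow> (\<lambda>x. f x - g x) \<in> ell2"
  using ell2_lincomb[of f g 1 "-1"] by simp

lemma ell2_finite_support:
  assumes "finite G" "\<And>x. x \<notin> G \<Longrightarrow> f x = 0"
  shows "f \<in> ell2"
proof -
  have "(\<lambda>x. (cmod (f x))^2) summable_on UNIV \<longleftrightarrow> (\<lambda>x. (cmod (f x))^2) summable_on G"
    by (rule summable_on_cong_neutral) (use assms in auto)
  with assms(1) show ?thesis unfolding ell2_def by simp
qed

lemma delta_ell2: "delta x \<in> ell2"
  by (rule ell2_finite_support[of "{x}"]) (auto simp: delta_def)

lemma ell2_summable_on: "f \<in> ell2 \<Longrightarrow> (\<lambda>x. (cmod (f x))^2) summable_on A"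
  unfolding ell2_def using summable_on_subset_banach by blast

lemma norm_mult_summable_on:
  assumes "f \<in> ell2" "g \<in> ell2"
  shows "(\<lambda>x. cmod (f x) * cmod (g x)) summable_on A"
proof -
  have bound: "(\<lambda>x. (1/2) * (cmod (f x))^2 + (1/2) * (cmod (g x))^2) summable_on A"
    using assms by (intro summable_on_add summable_on_cmult_right ell2_summable_on)
  show ?thesis
  proof (rule summable_on_comparison_test[OF bound])
    show "cmod (f x) * cmod (g x) \<le> (1/2) * (cmod (f x))^2 + (1/2) * (cmod (g x))^2" for x
      using sum_squares_bound[of "cmod (f x)" "cmod (g x)"] by simp
  qed simp
qed

lemma inner_summable_on:
  assumes "f \<in> ell2" "g \<in> ell2"
  shows "(\<lambda>x. cnj (f x) * g x) summable_on A"
  using norm_mult_summable_on[OF assms, of A]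
  by (simp add: summable_on_iff_abs_summable_on_complex norm_mult)

lemma l2inner_lincomb_right:
  assumes "f \<in> ell2" "g \<in> ell2" "h \<in> ell2"
  shows "l2inner f (\<lambda>x. a * g x + b * h x) = a * l2inner f g + b * l2inner f h"
proof -
  have "l2inner f (\<lambda>x. a * g x + b * h x) = (\<Sum>\<^sub>\<infinity>x. a * (cnj (f x) * g x) + b * (cnj (f x) * h x))"
    unfolding l2inner_def by (simp add: algebra_simps)
  also have "\<dots> = a * l2inner f g + b * l2inner f h"
    unfolding l2inner_def using assms
    by (simp add: infsum_add summable_on_cmult_right inner_summable_on infsum_cmult_right)
  finally show ?thesis .
qed

lemma l2inner_diff_right:
  assumes "f \<in> ell2" "g \<in> ell2" "h \<in> ell2"
  shows "l2inner f (\<lambda>x. g x - h x) = l2inner f g - l2inner f h"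
  using l2inner_lincomb_right[OF assms, of 1 "-1"] by simp

lemma cnj_l2inner: "cnj (l2inner f g) = l2inner g f"
  unfolding l2inner_def by (simp flip: infsum_cnj add: mult.commute)

lemma l2inner_lincomb_left:
  assumes "f \<in> ell2" "g \<in> ell2" "h \<in> ell2"
  shows "l2inner (\<lambda>x. a * f x + b * g x) h = cnj a * l2inner f h + cnj b * l2inner g h"
  using arg_cong[OF l2inner_lincomb_right[OF assms(3,1,2), of a b], of cnj]
  by (simp add: cnj_l2inner)

lemma l2inner_finite_support:
  assumes "finite G" "\<And>x. x \<notin> G \<Longrightarrow> u x = 0 \<or> v x = 0"
  shows "l2inner u v = (\<Sum>x\<in>G. cnj (u x) * v x)"
proof -
  have "l2inner u v = infsum (\<lambda>x. cnj (u x) * v x) G"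
    unfolding l2inner_def by (rule infsum_cong_neutral) (use assms in auto)
  with assms(1) show ?thesis by simp
qed

lemma l2inner_delta: "l2inner (delta x) v = v x"
  by (subst l2inner_finite_support[of "{x}"]) (auto simp: delta_def)

lemma l2inner_split:
  assumes "u \<in> ell2" "v \<in> ell2" "finite G"
  shows "l2inner u v = (\<Sum>x\<in>G. cnj (u x) * v x) + infsum (\<lambda>x. cnj (u x) * v x) (-G)"
proof -
  have "l2inner u v = infsum (\<lambda>x. cnj (u x) * v x) (G \<union> -G)"
    unfolding l2inner_def by simp
  also have "\<dots> = infsum (\<lambda>x. cnj (u x) * v x) G + infsum (\<lambda>x. cnj (u x) * v x) (-G)"
    by (intro infsum_Un_disjoint inner_summable_on assms) auto
  finally show ?thesis using assms(3) by simp
qed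

lemma l2norm_sq: "(l2norm f)^2 = (\<Sum>\<^sub>\<infinity>x. (cmod (f x))^2)"
  unfolding l2norm_def by (simp add: infsum_nonneg)

lemma l2norm_nonneg: "l2norm f \<ge> 0"
  unfolding l2norm_def by (simp add: infsum_nonneg)

lemma l2norm_delta: "l2norm (delta y) = 1"
proof -
  have "(\<Sum>\<^sub>\<infinity>x. (cmod (delta y x))^2) = infsum (\<lambda>x. (cmod (delta y x))^2) {y}"
    by (rule infsum_cong_neutral) (auto simp: delta_def)
  then show ?thesis by (simp add: l2norm_def delta_def)
qed

lemma sum_le_l2norm_sq:
  assumes "f \<in> ell2" "finite G"
  shows "(\<Sum>x\<in>G. (cmod (f x))^2) \<le> (l2norm f)^2"
  unfolding l2norm_sq using assms by (intro finite_sum_le_infsum) (auto simp: ell2_def)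

lemma norm_le_l2norm: "f \<in> ell2 \<Longrightarrow> cmod (f x) \<le> l2norm f"
  using sum_le_l2norm_sq[of f "{x}"] l2norm_nonneg by (auto intro: power2_le_imp_le)

lemma l2norm_le_imp_sq_le:
  assumes "l2norm g \<le> C * l2norm f"
  shows "(l2norm g)^2 \<le> C^2 * (l2norm f)^2"
proof -
  have "(l2norm g)^2 \<le> (C * l2norm f)^2"
    using assms l2norm_nonneg by (intro power_mono) auto
  then show ?thesis by (simp add: power_mult_distrib)
qed

lemma l2norm_diff_sq:
  assumes "u \<in> ell2" "v \<in> ell2"
  shows "(l2norm (\<lambda>x. u x - v x))^2 \<le> 2 * (l2norm u)^2 + 2 * (l2norm v)^2"
proof -
  have su: "(\<lambda>x. (cmod (u x))^2) summable_on UNIV" "(\<lambda>x. (cmod (v x))^2) summable_on UNIV"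
    using assms by (auto simp: ell2_def)
  have "(\<Sum>\<^sub>\<infinity>x. (cmod (u x - v x))^2) \<le> (\<Sum>\<^sub>\<infinity>x. 2 * (cmod (u x))^2 + 2 * (cmod (v x))^2)"
  proof (rule infsum_mono)
    show "(\<lambda>x. (cmod (u x - v x))^2) summable_on UNIV"
      using ell2_diff[OF assms] by (simp add: ell2_def)
    show "(\<lambda>x. 2 * (cmod (u x))^2 + 2 * (cmod (v x))^2) summable_on UNIV"
      by (intro summable_on_add summable_on_cmult_right su)
    fix x
    have "(cmod (u x - v x))^2 \<le> (cmod (u x) + cmod (v x))^2"
      by (simp add: power_mono norm_triangle_ineq4)
    also have "\<dots> \<le> 2 * (cmod (u x))^2 + 2 * (cmod (v x))^2" by (rule square_sum_le)
    finally show "(cmod (u x - v x))^2 \<le> 2 * (cmod (u x))^2 + 2 * (cmod (v x))^2" .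
  qed
  also have "\<dots> = 2 * (l2norm u)^2 + 2 * (l2norm v)^2"
    unfolding l2norm_sq using su
    by (simp add: infsum_add summable_on_cmult_right infsum_cmult_right)
  finally show ?thesis by (simp add: l2norm_sq)
qed

lemma norm_infsum_inner_le:
  assumes "f \<in> ell2" "g \<in> ell2" "d > 0"
  shows "cmod (infsum (\<lambda>x. cnj (f x) * g x) A) \<le>
     (infsum (\<lambda>x. (cmod (f x))^2) A / d + d * infsum (\<lambda>x. (cmod (g x))^2) A) / 2"
proof -
  have sf: "(\<lambda>x. (cmod (f x))^2) summable_on A" "(\<lambda>x. (cmod (g x))^2) summable_on A"
    using assms by (auto intro: ell2_summable_on)
  have "cmod (infsum (\<lambda>x. cnj (f x) * g x) A) \<le> infsum (\<lambda>x. cmod (f x) * cmod (g x)) A"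
    using norm_infsum_bound[of "\<lambda>x. cnj (f x) * g x" A] norm_mult_summable_on[OF assms(1,2)]
    by (simp add: norm_mult)
  also have "\<dots> \<le> infsum (\<lambda>x. (1 / (2 * d)) * (cmod (f x))^2 + (d / 2) * (cmod (g x))^2) A"
  proof (rule infsum_mono)
    show "(\<lambda>x. cmod (f x) * cmod (g x)) summable_on A" by (rule norm_mult_summable_on[OF assms(1,2)])
    show "(\<lambda>x. (1 / (2 * d)) * (cmod (f x))^2 + (d / 2) * (cmod (g x))^2) summable_on A"
      by (intro summable_on_add summable_on_cmult_right sf)
    show "cmod (f x) * cmod (g x) \<le> (1 / (2 * d)) * (cmod (f x))^2 + (d / 2) * (cmod (g x))^2" for x
      using mult_le_weighted_squares[OF assms(3), of "cmod (f x)" "cmod (g x)"]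
      by (simp add: field_simps)
  qed
  also have "\<dots> = (1 / (2 * d)) * infsum (\<lambda>x. (cmod (f x))^2) A + (d / 2) * infsum (\<lambda>x. (cmod (g x))^2) A"
    by (simp only: infsum_add[OF summable_on_cmult_right[OF sf(1)] summable_on_cmult_right[OF sf(2)]]
        infsum_cmult_right[OF sf(1)] infsum_cmult_right[OF sf(2)])
  also have "\<dots> = (infsum (\<lambda>x. (cmod (f x))^2) A / d + d * infsum (\<lambda>x. (cmod (g x))^2) A) / 2"
    by (simp add: field_simps)
  finally show ?thesis .
qed

lemma norm_l2inner_le:
  assumes "f \<in> ell2" "g \<in> ell2"
  shows "cmod (l2inner f g) \<le> ((l2norm f)^2 + (l2norm g)^2) / 2"
  using norm_infsum_inner_le[OF assms, of 1 UNIV] unfolding l2inner_def l2norm_sq by simp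

lemma l2norm_le_by_comparison:
  assumes "f \<in> ell2" "finite G" "\<And>x. x \<notin> G \<Longrightarrow> cmod (g x) \<le> cmod (f x)"
    "(\<Sum>x\<in>G. (cmod (g x))^2) \<le> (\<Sum>x\<in>G. (cmod (f x))^2)"
  shows "g \<in> ell2" "l2norm g \<le> l2norm f"
proof -
  have sf: "(\<lambda>x. (cmod (f x))^2) summable_on (-G)"
    using assms(1) by (rule ell2_summable_on)
  have sg: "(\<lambda>x. (cmod (g x))^2) summable_on (-G)"
    by (rule summable_on_comparison_test[OF sf]) (use assms(3) in \<open>auto intro: power_mono\<close>)
  have "(\<lambda>x. (cmod (g x))^2) summable_on (G \<union> -G)"
    by (intro summable_on_Un_disjoint sg) (use assms(2) in auto)
  then show "g \<in> ell2" by (simp add: ell2_def)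
  have "(l2norm g)^2 = infsum (\<lambda>x. (cmod (g x))^2) (G \<union> -G)" by (simp add: l2norm_sq)
  also have "\<dots> = (\<Sum>x\<in>G. (cmod (g x))^2) + infsum (\<lambda>x. (cmod (g x))^2) (-G)"
    by (subst infsum_Un_disjoint) (use sg assms(2) in auto)
  also have "\<dots> \<le> (\<Sum>x\<in>G. (cmod (f x))^2) + infsum (\<lambda>x. (cmod (f x))^2) (-G)"
    by (intro add_mono assms(4) infsum_mono sf sg) (use assms(3) in \<open>auto intro: power_mono\<close>)
  also have "\<dots> = infsum (\<lambda>x. (cmod (f x))^2) (G \<union> -G)"
    by (subst infsum_Un_disjoint) (use sf assms(2) in auto)
  also have "\<dots> = (l2norm f)^2" by (simp add: l2norm_sq)
  finally show "l2norm g \<le> l2norm f"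
    using l2norm_nonneg by (rule power2_le_imp_le)
qed

section \<open>Directed nets and weak limits\<close>

definition directed_filter :: "'i set \<Rightarrow> ('i \<Rightarrow> 'i \<Rightarrow> bool) \<Rightarrow> 'i filter" where
  "directed_filter D le = (INF i\<in>D. principal {j\<in>D. le i j})"

lemma eventually_directed_filter:
  assumes "D \<noteq> {}" and trans: "\<forall>i\<in>D. \<forall>j\<in>D. \<forall>k\<in>D. le i j \<and> le j k \<longrightarrow> le i k"
    and dir: "\<forall>i\<in>D. \<forall>j\<in>D. \<exists>k\<in>D. le i k \<and> le j k"
  shows "eventually P (directed_filter D le) \<longleftrightarrow> (\<exists>i\<in>D. \<forall>j\<in>D. le i j \<longrightarrow> P j)"
proof -
  have "\<exists>k\<in>D. principal {j\<in>D. le k j} \<le> inf (principal {j\<in>D. le a j}) (principal {j\<in>D. le b j})"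
    if ab: "a \<in> D" "b \<in> D" for a b
  proof -
    obtain k where k: "k \<in> D" "le a k" "le b k" using dir ab by blast
    have "{j\<in>D. le k j} \<subseteq> {j\<in>D. le a j} \<inter> {j\<in>D. le b j}"
      using trans[rule_format, of a k] trans[rule_format, of b k] k ab by auto
    then have "principal {j\<in>D. le k j} \<le> inf (principal {j\<in>D. le a j}) (principal {j\<in>D. le b j})"
      by (simp only: inf_principal principal_le_iff)
    with k(1) show ?thesis by blast
  qed
  then have "eventually P (directed_filter D le) = (\<exists>i\<in>D. eventually P (principal {j\<in>D. le i j}))"
    unfolding directed_filter_def by (rule eventually_INF_base[OF assms(1)])
  then show ?thesis
    unfolding eventually_principal by blast
qed

lemma tendsto_SUP_monotone_net:
  fixes \<phi> :: "'i \<Rightarrow> real"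
  assumes ev: "\<And>P. eventually P F \<longleftrightarrow> (\<exists>i\<in>D. \<forall>j\<in>D. le i j \<longrightarrow> P j)"
    and "D \<noteq> {}" and mono: "\<And>i j. i \<in> D \<Longrightarrow> j \<in> D \<Longrightarrow> le i j \<Longrightarrow> \<phi> i \<le> \<phi> j"
    and bdd: "bdd_above (\<phi> ` D)"
  shows "(\<phi> \<longlongrightarrow> (SUP i\<in>D. \<phi> i)) F"
proof (rule order_tendstoI)
  fix a assume "a < (SUP i\<in>D. \<phi> i)"
  then obtain i where "i \<in> D" "a < \<phi> i" using less_cSUP_iff[OF assms(2) bdd] by auto
  then show "eventually (\<lambda>j. a < \<phi> j) F"
    unfolding ev using mono by (meson order_less_le_trans)
next
  fix a assume "(SUP i\<in>D. \<phi> i) < a"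
  then have "\<forall>j\<in>D. \<phi> j < a" using cSUP_upper[OF _ bdd] by fastforce
  then show "eventually (\<lambda>j. \<phi> j < a) F" unfolding ev using assms(2) by blast
qed

lemma l2inner_tails_uniformly_small:
  assumes f: "f \<in> ell2" and "e > 0"
  obtains G where "finite G"
    "\<And>r. r \<in> ell2 \<Longrightarrow> (l2norm r)^2 \<le> M \<Longrightarrow> cmod (infsum (\<lambda>x. cnj (f x) * r x) (-G)) \<le> e"
proof -
  define d where "d = e / (1 + \<bar>M\<bar>)"
  have d: "d > 0" using \<open>e > 0\<close> by (simp add: d_def add_pos_nonneg)
  have sf: "(\<lambda>x. (cmod (f x))^2) summable_on UNIV" using f by (simp add: ell2_def)
  obtain G where G: "finite G" "dist (\<Sum>x\<in>G. (cmod (f x))^2) (\<Sum>\<^sub>\<infinity>x. (cmod (f x))^2) \<le> d^2"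
    using infsum_finite_approximation[OF sf, of "d^2"] d by auto
  have "(\<Sum>\<^sub>\<infinity>x. (cmod (f x))^2) = (\<Sum>x\<in>G. (cmod (f x))^2) + infsum (\<lambda>x. (cmod (f x))^2) (-G)"
    using infsum_Un_disjoint[OF _ ell2_summable_on[OF f], of G "-G"] G(1) by simp
  then have tail_f: "infsum (\<lambda>x. (cmod (f x))^2) (-G) \<le> d^2"
    using G(2) by (simp add: dist_real_def)
  have "cmod (infsum (\<lambda>x. cnj (f x) * r x) (-G)) \<le> e"
    if r: "r \<in> ell2" and rM: "(l2norm r)^2 \<le> M" for r
  proof -
    have tail_r: "infsum (\<lambda>x. (cmod (r x))^2) (-G) \<le> M"
      using infsum_mono_neutral[OF ell2_summable_on[OF r] ell2_summable_on[OF r], of "-G" UNIV] rM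
      by (simp add: l2norm_sq)
    have "cmod (infsum (\<lambda>x. cnj (f x) * r x) (-G)) \<le>
        (infsum (\<lambda>x. (cmod (f x))^2) (-G) / d + d * infsum (\<lambda>x. (cmod (r x))^2) (-G)) / 2"
      by (rule norm_infsum_inner_le[OF f r d])
    also have "\<dots> \<le> (d^2 / d + d * \<bar>M\<bar>) / 2"
      using tail_f tail_r d by (intro divide_right_mono add_mono mult_left_mono) auto
    also have "d^2 / d + d * \<bar>M\<bar> = d * (1 + \<bar>M\<bar>)"
      using d by (simp add: power2_eq_square algebra_simps)
    also have "\<dots> = e" by (simp add: d_def add_pos_nonneg)
    finally show ?thesis using \<open>e > 0\<close> by simp
  qed
  with G(1) show ?thesis by (rule that)
qed

lemma weak_convergence_of_bounded_net:
  fixes F :: "'i filter" and h :: "'i \<Rightarrow> 'a vec"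
  assumes conv: "\<And>x. ((\<lambda>i. h i x) \<longlongrightarrow> g x) F"
    and ev: "eventually (\<lambda>i. h i \<in> ell2 \<and> (l2norm (h i))^2 \<le> M) F"
    and g: "g \<in> ell2" and gM: "(l2norm g)^2 \<le> M" and f: "f \<in> ell2"
  shows "((\<lambda>i. l2inner f (h i)) \<longlongrightarrow> l2inner f g) F"
proof (rule tendstoI)
  fix e :: real assume e: "e > 0"
  obtain G where G: "finite G" and tail: "\<And>r. r \<in> ell2 \<Longrightarrow> (l2norm r)^2 \<le> 4 * M \<Longrightarrow>
      cmod (infsum (\<lambda>x. cnj (f x) * r x) (-G)) \<le> e / 4"
    using l2inner_tails_uniformly_small[OF f, of "e / 4" "4 * M"] e by auto
  have "((\<lambda>i. \<Sum>x\<in>G. cnj (f x) * (h i x - g x)) \<longlongrightarrow> (\<Sum>x\<in>G. cnj (f x) * (g x - g x))) F"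
    by (intro tendsto_intros conv)
  then have "eventually (\<lambda>i. dist (\<Sum>x\<in>G. cnj (f x) * (h i x - g x)) 0 < e / 2) F"
    using e by (intro tendstoD) auto
  with ev show "eventually (\<lambda>i. dist (l2inner f (h i)) (l2inner f g) < e) F"
  proof eventually_elim
    case (elim i)
    define r where "r = (\<lambda>x. h i x - g x)"
    have r: "r \<in> ell2" unfolding r_def using elim g by (blast intro: ell2_diff)
    have "(l2norm r)^2 \<le> 4 * M"
      using l2norm_diff_sq[of "h i" g] elim g gM unfolding r_def by linarith
    then have tail_r: "cmod (infsum (\<lambda>x. cnj (f x) * r x) (-G)) \<le> e / 4"
      by (rule tail[OF r])
    have "l2inner f (h i) - l2inner f g = l2inner f r"
      unfolding r_def using elim by (intro l2inner_diff_right[symmetric] f g) simp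
    also have "\<dots> = (\<Sum>x\<in>G. cnj (f x) * r x) + infsum (\<lambda>x. cnj (f x) * r x) (-G)"
      by (rule l2inner_split[OF f r G])
    finally have "dist (l2inner f (h i)) (l2inner f g)
        \<le> cmod (\<Sum>x\<in>G. cnj (f x) * r x) + cmod (infsum (\<lambda>x. cnj (f x) * r x) (-G))"
      by (simp only: dist_norm norm_triangle_ineq)
    then show ?case using elim tail_r e unfolding r_def dist_norm by simp
  qed
qed

lemma weak_limit_of_bounded_net:
  fixes F :: "'i filter" and h :: "'i \<Rightarrow> 'a vec"
  assumes F: "F \<noteq> bot"
    and conv: "\<And>x. ((\<lambda>i. h i x) \<longlongrightarrow> g x) F"
    and ev: "eventually (\<lambda>i. h i \<in> ell2 \<and> (l2norm (h i))^2 \<le> M) F"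
  shows "g \<in> ell2" "(l2norm g)^2 \<le> M"
    "\<And>f. f \<in> ell2 \<Longrightarrow> ((\<lambda>i. l2inner f (h i)) \<longlongrightarrow> l2inner f g) F"
proof -
  have fin: "(\<Sum>x\<in>G. (cmod (g x))^2) \<le> M" if "finite G" for G
  proof (rule tendsto_upperbound[OF _ _ F])
    show "((\<lambda>i. \<Sum>x\<in>G. (cmod (h i x))^2) \<longlongrightarrow> (\<Sum>x\<in>G. (cmod (g x))^2)) F"
      by (intro tendsto_sum tendsto_power tendsto_norm conv)
    show "eventually (\<lambda>i. (\<Sum>x\<in>G. (cmod (h i x))^2) \<le> M) F"
      using ev by eventually_elim (use sum_le_l2norm_sq[OF _ that] in force)
  qed
  have sg: "(\<lambda>x. (cmod (g x))^2) summable_on UNIV"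
    by (intro nonneg_bdd_above_summable_on bdd_aboveI[where M = M]) (auto intro: fin)
  then show g: "g \<in> ell2" by (simp add: ell2_def)
  show gM: "(l2norm g)^2 \<le> M"
    unfolding l2norm_sq by (rule infsum_le_finite_sums[OF sg]) (use fin in auto)
  show "((\<lambda>i. l2inner f (h i)) \<longlongrightarrow> l2inner f g) F" if "f \<in> ell2" for f
    by (rule weak_convergence_of_bounded_net[OF conv ev g gM that])
qed

section \<open>Quadratic forms and the operator order\<close>

lemma bounded_op_ell2: "bounded_op T \<Longrightarrow> f \<in> ell2 \<Longrightarrow> T f \<in> ell2"
  unfolding bounded_op_def by blast

lemma bounded_op_lincomb: "bounded_op T \<Longrightarrow> f \<in> ell2 \<Longrightarrow> g \<in> ell2 \<Longrightarrow>
    T (\<lambda>x. a * f x + b * g x) = (\<lambda>x. a * T f x + b * T g x)"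
  unfolding bounded_op_def by blast

lemma self_adjoint_op_bounded: "self_adjoint_op T \<Longrightarrow> bounded_op T"
  unfolding self_adjoint_op_def by blast

definition add_scaled :: "'a vec \<Rightarrow> complex \<Rightarrow> 'a vec \<Rightarrow> 'a vec" where
  "add_scaled u c v = (\<lambda>x. u x + c * v x)"

definition quad_form :: "'a op \<Rightarrow> 'a vec \<Rightarrow> complex" where
  "quad_form T f = l2inner f (T f)"

definition polar :: "('a vec \<Rightarrow> complex) \<Rightarrow> 'a vec \<Rightarrow> 'a vec \<Rightarrow> complex" where
  "polar q u v = (q (add_scaled u 1 v) - q (add_scaled u (-1) v)) / 4
              + (q (add_scaled u \<i> v) - q (add_scaled u (-\<i>) v)) / (4 * \<i>)"

lemma add_scaled_ell2: "u \<in> ell2 \<Longrightarrow> v \<in> ell2 \<Longrightarrow> add_scaled u c v \<in> ell2"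
  unfolding add_scaled_def using ell2_lincomb[of u v 1 c] by simp

lemma bounded_op_add_scaled:
  "bounded_op T \<Longrightarrow> u \<in> ell2 \<Longrightarrow> v \<in> ell2 \<Longrightarrow> T (add_scaled u c v) = add_scaled (T u) c (T v)"
  unfolding add_scaled_def using bounded_op_lincomb[of T u v 1 c] by simp

lemma quad_form_add_scaled:
  assumes "u \<in> ell2" "v \<in> ell2" "T u \<in> ell2" "T v \<in> ell2"
    and "T (add_scaled u c v) = add_scaled (T u) c (T v)"
  shows "quad_form T (add_scaled u c v) = quad_form T u + c * l2inner u (T v)
           + cnj c * l2inner v (T u) + cnj c * c * quad_form T v"
  using assms add_scaled_ell2[OF assms(1,2), of c]
  by (simp add: quad_form_def add_scaled_def l2inner_lincomb_right[where a = 1, simplified]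
      l2inner_lincomb_left[where a = 1, simplified] algebra_simps)

lemma polarization:
  assumes "bounded_op T" "u \<in> ell2" "v \<in> ell2"
  shows "l2inner u (T v) = polar (quad_form T) u v"
proof -
  have Tuv: "T u \<in> ell2" "T v \<in> ell2" using assms by (auto intro: bounded_op_ell2)
  show ?thesis
    unfolding polar_def
    using quad_form_add_scaled[OF assms(2,3) Tuv bounded_op_add_scaled[OF assms]]
    by (simp add: field_simps)
qed

lemma Im_quad_form_self_adjoint:
  assumes "self_adjoint_op T" "f \<in> ell2"
  shows "Im (quad_form T f) = 0"
proof -
  have "cnj (quad_form T f) = quad_form T f"
    using assms unfolding self_adjoint_op_def quad_form_def by (simp add: cnj_l2inner)
  then show ?thesis by (simp add: complex_eq_iff)
qed

text \<open>Complex numbers carry the partial order of \<^theory>\<open>HOL-Library.Complex_Order\<close>: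
  \<open>z \<le> w\<close> iff \<open>Re z \<le> Re w\<close> and \<open>Im z = Im w\<close>.\<close>

lemma op_le_iff: "op_le S T \<longleftrightarrow> (\<forall>f\<in>ell2. 0 \<le> l2inner f (\<lambda>x. T f x - S f x))"
  unfolding op_le_def less_eq_complex_def by auto

lemma op_le_iff_quad_form:
  assumes "bounded_op S" "bounded_op T"
  shows "op_le S T \<longleftrightarrow> (\<forall>f\<in>ell2. quad_form S f \<le> quad_form T f)"
  unfolding op_le_iff quad_form_def using assms
  by (simp add: l2inner_diff_right bounded_op_ell2)

section \<open>Bounded monotone nets of operators have suprema\<close>

lemma tendsto_entries_by_polarization:
  assumes bounded: "eventually (\<lambda>i. bounded_op (N i)) F"
    and conv: "\<And>f. f \<in> ell2 \<Longrightarrow> ((\<lambda>i. quad_form (N i) f) \<longlongrightarrow> Q f) F" and f: "f \<in> ell2"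
  shows "((\<lambda>i. N i f x) \<longlongrightarrow> polar Q (delta x) f) F"
proof -
  have "((\<lambda>i. polar (quad_form (N i)) (delta x) f) \<longlongrightarrow> polar Q (delta x) f) F"
    unfolding polar_def by (intro tendsto_intros conv add_scaled_ell2 delta_ell2 f) simp_all
  moreover have "eventually (\<lambda>i. polar (quad_form (N i)) (delta x) f = N i f x) F"
    using bounded by eventually_elim (simp add: polarization[symmetric] delta_ell2 f l2inner_delta)
  ultimately show ?thesis by (rule Lim_transform_eventually)
qed

lemma pointwise_limit_lincomb:
  fixes F :: "'i filter" and N :: "'i \<Rightarrow> 'a op"
  assumes F: "F \<noteq> bot" and bounded: "eventually (\<lambda>i. bounded_op (N i)) F"
    and pointwise: "\<And>f x. f \<in> ell2 \<Longrightarrow> ((\<lambda>i. N i f x) \<longlongrightarrow> S f x) F"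
    and f: "f \<in> ell2" and g: "g \<in> ell2"
  shows "S (\<lambda>x. a * f x + b * g x) = (\<lambda>x. a * S f x + b * S g x)"
proof
  fix x
  have "((\<lambda>i. a * N i f x + b * N i g x) \<longlongrightarrow> a * S f x + b * S g x) F"
    by (intro tendsto_intros pointwise f g)
  moreover have "eventually (\<lambda>i. a * N i f x + b * N i g x = N i (\<lambda>x. a * f x + b * g x) x) F"
    using bounded by eventually_elim (simp add: bounded_op_lincomb f g)
  ultimately have "((\<lambda>i. N i (\<lambda>x. a * f x + b * g x) x) \<longlongrightarrow> a * S f x + b * S g x) F"
    by (rule Lim_transform_eventually)
  then show "S (\<lambda>x. a * f x + b * g x) x = a * S f x + b * S g x"
    using tendsto_unique[OF F pointwise[OF ell2_lincomb[OF f g]]] by blast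
qed

lemma weak_operator_limit:
  fixes F :: "'i filter" and N :: "'i \<Rightarrow> 'a op"
  assumes F: "F \<noteq> bot"
    and ev: "eventually (\<lambda>i. self_adjoint_op (N i) \<and> (\<forall>f\<in>ell2. l2norm (N i f) \<le> C * l2norm f)) F"
    and conv: "\<And>f. f \<in> ell2 \<Longrightarrow> ((\<lambda>i. quad_form (N i) f) \<longlongrightarrow> Q f) F"
  shows "\<exists>S. self_adjoint_op S \<and>
    (\<forall>f\<in>ell2. \<forall>g\<in>ell2. ((\<lambda>i. l2inner g (N i f)) \<longlongrightarrow> l2inner g (S f)) F)"
proof -
  define S where "S f x = polar Q (delta x) f" for f x
  have bounded: "eventually (\<lambda>i. bounded_op (N i)) F"
    using ev by eventually_elim (simp add: self_adjoint_op_bounded)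
  have pointwise: "((\<lambda>i. N i f x) \<longlongrightarrow> S f x) F" if "f \<in> ell2" for f x
    unfolding S_def by (rule tendsto_entries_by_polarization[OF bounded conv that])
  have limit: "S f \<in> ell2 \<and> (l2norm (S f))^2 \<le> C^2 * (l2norm f)^2 \<and>
      (\<forall>g\<in>ell2. ((\<lambda>i. l2inner g (N i f)) \<longlongrightarrow> l2inner g (S f)) F)" if f: "f \<in> ell2" for f
  proof -
    have "eventually (\<lambda>i. N i f \<in> ell2 \<and> (l2norm (N i f))^2 \<le> C^2 * (l2norm f)^2) F"
      using ev by eventually_elim
        (use f in \<open>auto intro: l2norm_le_imp_sq_le bounded_op_ell2 self_adjoint_op_bounded\<close>)
    then show ?thesis
      using weak_limit_of_bounded_net[where h = "\<lambda>i. N i f" and g = "S f", OF F pointwise[OF f]] by blast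
  qed
  have "l2norm (S f) \<le> \<bar>C\<bar> * l2norm f" if "f \<in> ell2" for f
  proof -
    have "(l2norm (S f))^2 \<le> (\<bar>C\<bar> * l2norm f)^2"
      using limit[OF that] by (simp add: power_mult_distrib)
    then show ?thesis by (rule power2_le_imp_le) (simp add: l2norm_nonneg)
  qed
  then have "bounded_op S"
    unfolding bounded_op_def using limit pointwise_limit_lincomb[OF F bounded pointwise] by blast
  moreover have "l2inner (S f) g = l2inner f (S g)" if f: "f \<in> ell2" and g: "g \<in> ell2" for f g
  proof -
    have "((\<lambda>i. cnj (l2inner g (N i f))) \<longlongrightarrow> cnj (l2inner g (S f))) F"
      using limit f g by (intro tendsto_cnj) blast
    moreover have "eventually (\<lambda>i. cnj (l2inner g (N i f)) = l2inner f (N i g)) F"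
      using ev by eventually_elim (use f g in \<open>auto simp: self_adjoint_op_def cnj_l2inner\<close>)
    ultimately have "((\<lambda>i. l2inner f (N i g)) \<longlongrightarrow> cnj (l2inner g (S f))) F"
      by (rule Lim_transform_eventually)
    then have "l2inner f (S g) = cnj (l2inner g (S f))"
      using tendsto_unique[OF F] limit f g by blast
    then show ?thesis by (simp add: cnj_l2inner)
  qed
  ultimately have "self_adjoint_op S"
    unfolding self_adjoint_op_def by blast
  then show ?thesis using limit by blast
qed

lemma quad_forms_bdd_above:
  assumes "\<forall>i\<in>D. self_adjoint_op (N i)" "\<forall>i\<in>D. \<forall>f\<in>ell2. l2norm (N i f) \<le> C * l2norm f"
    and f: "f \<in> ell2"
  shows "bdd_above ((\<lambda>i. Re (quad_form (N i) f)) ` D)"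
proof (rule bdd_aboveI2)
  fix i assume i: "i \<in> D"
  have "Re (quad_form (N i) f) \<le> cmod (quad_form (N i) f)" by (rule complex_Re_le_cmod)
  also have "\<dots> \<le> ((l2norm f)^2 + (l2norm (N i f))^2) / 2"
    using assms(1) i bounded_op_ell2[OF self_adjoint_op_bounded f, of "N i"] unfolding quad_form_def
    by (intro norm_l2inner_le f) blast
  also have "\<dots> \<le> ((l2norm f)^2 + C^2 * (l2norm f)^2) / 2"
    using l2norm_le_imp_sq_le[of "N i f" C f] assms(2) f i by (simp add: divide_right_mono)
  finally show "Re (quad_form (N i) f) \<le> ((l2norm f)^2 + C^2 * (l2norm f)^2) / 2" .
qed

lemma quad_form_tendsto_SUP:
  fixes N :: "'i \<Rightarrow> 'a op"
  assumes ev: "\<And>P. eventually P F \<longleftrightarrow> (\<exists>i\<in>D. \<forall>j\<in>D. le i j \<longrightarrow> P j)" and "D \<noteq> {}"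
    and sa: "\<forall>i\<in>D. self_adjoint_op (N i)"
    and mono: "\<forall>i\<in>D. \<forall>j\<in>D. le i j \<longrightarrow> op_le (N i) (N j)"
    and bnd: "\<forall>i\<in>D. \<forall>f\<in>ell2. l2norm (N i f) \<le> C * l2norm f"
    and f: "f \<in> ell2"
  shows "((\<lambda>i. quad_form (N i) f) \<longlongrightarrow> complex_of_real (SUP i\<in>D. Re (quad_form (N i) f))) F"
proof -
  have N_bounded: "bounded_op (N i)" if "i \<in> D" for i
    using sa that by (blast intro: self_adjoint_op_bounded)
  have "Re (quad_form (N i) f) \<le> Re (quad_form (N j) f)" if "i \<in> D" "j \<in> D" "le i j" for i j
  proof -
    have "op_le (N i) (N j)" using mono that by blast
    then have "quad_form (N i) f \<le> quad_form (N j) f"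
      using op_le_iff_quad_form[OF N_bounded[OF that(1)] N_bounded[OF that(2)]] f by blast
    then show ?thesis by (simp add: less_eq_complex_def)
  qed
  moreover have "bdd_above ((\<lambda>i. Re (quad_form (N i) f)) ` D)"
    using sa bnd f by (rule quad_forms_bdd_above)
  ultimately have "((\<lambda>i. complex_of_real (Re (quad_form (N i) f))) \<longlongrightarrow>
      complex_of_real (SUP i\<in>D. Re (quad_form (N i) f))) F"
    by (intro tendsto_of_real tendsto_SUP_monotone_net[OF ev assms(2)]) auto
  moreover have "eventually (\<lambda>i. complex_of_real (Re (quad_form (N i) f)) = quad_form (N i) f) F"
  proof -
    have "complex_of_real (Re (quad_form (N i) f)) = quad_form (N i) f" if "i \<in> D" for i
      using Im_quad_form_self_adjoint[of "N i" f] sa that f by (simp add: complex_eq_iff)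
    then show ?thesis unfolding ev using assms(2) by blast
  qed
  ultimately show ?thesis by (rule Lim_transform_eventually)
qed

lemma bounded_monotone_net_has_lub:
  fixes D :: "'i set" and N :: "'i \<Rightarrow> 'a op"
  assumes "D \<noteq> {}" and refl: "\<forall>i\<in>D. le i i"
    and trans: "\<forall>i\<in>D. \<forall>j\<in>D. \<forall>k\<in>D. le i j \<and> le j k \<longrightarrow> le i k"
    and dir: "\<forall>i\<in>D. \<forall>j\<in>D. \<exists>k\<in>D. le i k \<and> le j k"
    and sa: "\<forall>i\<in>D. self_adjoint_op (N i)"
    and mono: "\<forall>i\<in>D. \<forall>j\<in>D. le i j \<longrightarrow> op_le (N i) (N j)"
    and bnd: "\<forall>i\<in>D. \<forall>f\<in>ell2. l2norm (N i f) \<le> C * l2norm f"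
  obtains S where "self_adjoint_op S" "\<And>i. i \<in> D \<Longrightarrow> op_le (N i) S"
    "\<And>U. self_adjoint_op U \<Longrightarrow> \<forall>i\<in>D. op_le (N i) U \<Longrightarrow> op_le S U"
proof -
  define F where "F = directed_filter D le"
  have ev: "eventually P F \<longleftrightarrow> (\<exists>i\<in>D. \<forall>j\<in>D. le i j \<longrightarrow> P j)" for P
    unfolding F_def by (rule eventually_directed_filter[OF assms(1) trans dir])
  have "\<not> eventually (\<lambda>_. False) F" unfolding ev using refl by blast
  then have F: "F \<noteq> bot" by auto
  define Q where "Q f = (SUP i\<in>D. Re (quad_form (N i) f))" for f
  have conv: "((\<lambda>i. quad_form (N i) f) \<longlongrightarrow> complex_of_real (Q f)) F" if "f \<in> ell2" for f
    unfolding Q_def by (rule quad_form_tendsto_SUP[OF ev assms(1) sa mono bnd that])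
  have "eventually (\<lambda>i. self_adjoint_op (N i) \<and> (\<forall>f\<in>ell2. l2norm (N i f) \<le> C * l2norm f)) F"
    unfolding ev using assms(1) sa bnd by blast
  then obtain S where S: "self_adjoint_op S"
    and weak: "\<And>f g. f \<in> ell2 \<Longrightarrow> g \<in> ell2 \<Longrightarrow> ((\<lambda>i. l2inner g (N i f)) \<longlongrightarrow> l2inner g (S f)) F"
    using weak_operator_limit[OF F _ conv] by blast
  have S_quad_form: "quad_form S f = complex_of_real (Q f)" if "f \<in> ell2" for f
    using tendsto_unique[OF F weak[OF that that] conv[OF that, unfolded quad_form_def]]
    by (simp add: quad_form_def)
  have S_bounded: "bounded_op S" by (rule self_adjoint_op_bounded[OF S])
  have N_bounded: "bounded_op (N i)" if "i \<in> D" for i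
    using sa that by (blast intro: self_adjoint_op_bounded)
  show thesis
  proof (rule that[OF S])
    fix i assume i: "i \<in> D"
    have "quad_form (N i) f \<le> quad_form S f" if "f \<in> ell2" for f
      using cSUP_upper[OF i quad_forms_bdd_above[OF sa bnd that]] Im_quad_form_self_adjoint[of "N i" f] sa i that
      by (simp add: S_quad_form[OF that] Q_def less_eq_complex_def)
    then show "op_le (N i) S"
      using op_le_iff_quad_form[OF N_bounded[OF i] S_bounded] by blast
  next
    fix U assume U: "self_adjoint_op U" and upper: "\<forall>i\<in>D. op_le (N i) U"
    have U_bounded: "bounded_op U" by (rule self_adjoint_op_bounded[OF U])
    have "complex_of_real (Q f) \<le> quad_form U f" if f: "f \<in> ell2" for f
    proof -
      have "Re (quad_form (N i) f) \<le> Re (quad_form U f)" if "i \<in> D" for i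
        using upper op_le_iff_quad_form[OF N_bounded[OF that] U_bounded] that f
        by (simp add: less_eq_complex_def)
      then have "Q f \<le> Re (quad_form U f)" unfolding Q_def by (intro cSUP_least assms(1))
      moreover have "Im (quad_form U f) = 0"
        by (rule Im_quad_form_self_adjoint[OF U f])
      ultimately show ?thesis by (simp add: less_eq_complex_def)
    qed
    then show "op_le S U"
      using op_le_iff_quad_form[OF S_bounded U_bounded] by (simp add: S_quad_form)
  qed
qed

lemma monotone_complete_bounded_ops: "monotone_complete {T :: 'a op. bounded_op T}"
  unfolding monotone_complete_def
proof (intro allI impI, elim conjE exE)
  fix D :: "'a op set" and le N C
  assume ne: "D \<noteq> {}" and refl: "\<forall>i\<in>D. le i i"
    and trans: "\<forall>i\<in>D. \<forall>j\<in>D. \<forall>k\<in>D. le i j \<and> le j k \<longrightarrow> le i k"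
    and dir: "\<forall>i\<in>D. \<forall>j\<in>D. \<exists>k\<in>D. le i k \<and> le j k"
    and members: "\<forall>i\<in>D. N i \<in> {T. bounded_op T} \<and> self_adjoint_op (N i)"
    and mono: "\<forall>i\<in>D. \<forall>j\<in>D. le i j \<longrightarrow> op_le (N i) (N j)"
    and bnd: "\<forall>i\<in>D. \<forall>f\<in>ell2. l2norm (N i f) \<le> C * l2norm f"
  have sa: "\<forall>i\<in>D. self_adjoint_op (N i)" using members by blast
  obtain S where S: "self_adjoint_op S" and "\<And>i. i \<in> D \<Longrightarrow> op_le (N i) S"
    and "\<And>U. self_adjoint_op U \<Longrightarrow> \<forall>i\<in>D. op_le (N i) U \<Longrightarrow> op_le S U"
    using bounded_monotone_net_has_lub[OF ne refl trans dir sa mono bnd] by blast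
  moreover have "S \<in> {T. bounded_op T}" using self_adjoint_op_bounded[OF S] by simp
  ultimately show "\<exists>S\<in>{T. bounded_op T}. self_adjoint_op S \<and> (\<forall>i\<in>D. op_le (N i) S) \<and>
      (\<forall>U\<in>{T. bounded_op T}. self_adjoint_op U \<and> (\<forall>i\<in>D. op_le (N i) U) \<longrightarrow> op_le S U)"
    by blast
qed

section \<open>The uniform Roe algebra\<close>

lemma finite_propagation_in_uniform_roe:
  fixes T :: "('a::metric_space) op"
  assumes "bounded_op T" "propagation_le L T"
  shows "T \<in> uniform_roe"
proof -
  have "finite_propagation T" unfolding finite_propagation_def using assms by blast
  moreover have "l2norm (\<lambda>x. T f x - T f x) \<le> \<epsilon> * l2norm f" if "\<epsilon> > 0" for f \<epsilon>
    using that l2norm_nonneg[of f] by (simp add: l2norm_def)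
  ultimately show ?thesis
    unfolding uniform_roe_def using assms(1) by blast
qed

lemma uniform_roe_eq_bounded_ops:
  assumes "bounded (UNIV :: 'a::metric_space set)"
  shows "uniform_roe = {T :: 'a op. bounded_op T}"
proof -
  obtain e where e: "\<And>x y :: 'a. dist x y \<le> e"
    using assms unfolding bounded_two_points by blast
  have "propagation_le (e + 1) (T :: 'a op)" for T
    unfolding propagation_le_def using e by (smt (verit))
  then have "{T :: 'a op. bounded_op T} \<subseteq> uniform_roe"
    using finite_propagation_in_uniform_roe by blast
  moreover have "uniform_roe \<subseteq> {T :: 'a op. bounded_op T}"
    unfolding uniform_roe_def by blast
  ultimately show ?thesis by blast
qed

lemma uniform_roe_far_entries_small:
  fixes T :: "('a::metric_space) op"
  assumes "T \<in> uniform_roe" "\<epsilon> > 0"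
  obtains R where "\<And>x y. R \<le> dist x y \<Longrightarrow> cmod (T (delta y) x) \<le> \<epsilon>"
proof -
  obtain S where "finite_propagation S" and approx: "\<forall>f\<in>ell2. l2norm (\<lambda>x. T f x - S f x) \<le> \<epsilon> * l2norm f"
    using assms unfolding uniform_roe_def by blast
  then obtain R where R: "propagation_le R S" and S: "bounded_op S"
    unfolding finite_propagation_def by blast
  have "cmod (T (delta y) x) \<le> \<epsilon>" if "R \<le> dist x y" for x y
  proof -
    have "S (delta y) x = 0"
      using R that unfolding propagation_le_def by (simp add: l2inner_delta)
    then have "cmod (T (delta y) x) = cmod (T (delta y) x - S (delta y) x)" by simp
    also have "\<dots> \<le> l2norm (\<lambda>x. T (delta y) x - S (delta y) x)"
      using assms(1) S unfolding uniform_roe_def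
      by (intro norm_le_l2norm ell2_diff) (auto intro: bounded_op_ell2 delta_ell2)
    also have "\<dots> \<le> \<epsilon> * l2norm (delta y)"
      by (rule approx[rule_format, OF delta_ell2])
    finally show ?thesis by (simp add: l2norm_delta)
  qed
  then show ?thesis by (rule that)
qed

lemma monotone_complete_incseq_lub:
  fixes N :: "nat \<Rightarrow> 'a op"
  assumes "monotone_complete A"
    and "\<And>n. N n \<in> A" "\<And>n. self_adjoint_op (N n)"
    and "\<And>m n. m \<le> n \<Longrightarrow> op_le (N m) (N n)"
    and "\<And>n f. f \<in> ell2 \<Longrightarrow> l2norm (N n f) \<le> C * l2norm f"
  shows "\<exists>L\<in>A. self_adjoint_op L \<and> (\<forall>n. op_le (N n) L) \<and>
    (\<forall>U\<in>A. self_adjoint_op U \<and> (\<forall>n. op_le (N n) U) \<longrightarrow> op_le L U)"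
proof -
  txt \<open>Nets are indexed by the operator type itself, so reindex the sequence along an
    injection of \<open>nat\<close> into it.\<close>
  define idx :: "nat \<Rightarrow> 'a op" where "idx n = (\<lambda>f x. of_nat n)" for n
  have "inj idx"
  proof (rule injI)
    fix m n assume "idx m = idx n"
    then have "idx m (\<lambda>_. 0) undefined = idx n (\<lambda>_. 0) undefined" by simp
    then show "m = n" by (simp add: idx_def)
  qed
  then have idx_inv [simp]: "inv idx (idx n) = n" for n by simp
  define D where "D = range idx"
  define le where "le i j \<longleftrightarrow> inv idx i \<le> inv idx j" for i j
  define M where "M i = N (inv idx i)" for i
  have dir: "\<forall>i\<in>D. \<forall>j\<in>D. \<exists>k\<in>D. le i k \<and> le j k"
  proof (intro ballI)
    fix i j assume "i \<in> D" "j \<in> D"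
    show "\<exists>k\<in>D. le i k \<and> le j k"
      by (rule bexI[of _ "idx (max (inv idx i) (inv idx j))"]) (auto simp: le_def D_def)
  qed
  have bnd: "\<exists>C. \<forall>i\<in>D. \<forall>f\<in>ell2. l2norm (M i f) \<le> C * l2norm f"
    unfolding M_def using assms(5) by blast
  have members: "\<forall>i\<in>D. M i \<in> A \<and> self_adjoint_op (M i)"
    and mono: "\<forall>i\<in>D. \<forall>j\<in>D. le i j \<longrightarrow> op_le (M i) (M j)"
    unfolding M_def le_def using assms(2-4) by auto
  have "D \<noteq> {}" and refl: "\<forall>i\<in>D. le i i"
    and trans: "\<forall>i\<in>D. \<forall>j\<in>D. \<forall>k\<in>D. le i j \<and> le j k \<longrightarrow> le i k"
    unfolding D_def le_def by auto
  then have "\<exists>L\<in>A. self_adjoint_op L \<and> (\<forall>i\<in>D. op_le (M i) L) \<and>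
      (\<forall>U\<in>A. self_adjoint_op U \<and> (\<forall>i\<in>D. op_le (M i) U) \<longrightarrow> op_le L U)"
    using assms(1) refl trans dir members mono bnd
    unfolding monotone_complete_def by (elim allE[of _ D] allE[of _ le] allE[of _ M] mp) blast
  then show ?thesis unfolding D_def M_def by simp
qed

lemma linear_coeff_zero_if_quadratic_nonneg:
  fixes a b :: real
  assumes "\<And>r. 0 \<le> a * r + b * r^2"
  shows "a = 0"
proof (rule ccontr)
  assume "a \<noteq> 0"
  define m where "m = \<bar>b\<bar> + 1"
  have m: "m > 0" by (simp add: m_def)
  have "a * (- a / m) + b * (- a / m)^2 = (a^2 / m^2) * (b - m)"
    using m by (simp add: field_simps power2_eq_square)
  also have "\<dots> < 0"
    using \<open>a \<noteq> 0\<close> m by (intro mult_pos_neg) (auto simp: m_def)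
  finally show False using assms[of "- a / m"] by linarith
qed

lemma op_le_kernel:
  assumes A: "bounded_op A" and B: "bounded_op B" and "op_le A B"
    and h: "h \<in> ell2" and g: "g \<in> ell2" and zero: "l2inner h (\<lambda>x. B h x - A h x) = 0"
  shows "l2inner g (\<lambda>x. B h x - A h x) = 0"
proof -
  txt \<open>The positive form of \<open>E = B - A\<close> vanishes at h, so nonnegativity of
    \<open>\<langle>h + t g, E (h + t g)\<rangle>\<close> for all scalars t forces its linear part in t to vanish.\<close>
  define E where "E w = (\<lambda>x. B w x - A w x)" for w
  have E_ell2: "E w \<in> ell2" if "w \<in> ell2" for w
    unfolding E_def using bounded_op_ell2[OF A that] bounded_op_ell2[OF B that] by (rule ell2_diff[rotated])
  have E_add_scaled: "E (add_scaled h t g) = add_scaled (E h) t (E g)" for t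
    unfolding E_def bounded_op_add_scaled[OF A h g] bounded_op_add_scaled[OF B h g]
    by (auto simp: add_scaled_def algebra_simps)
  define \<alpha> \<beta> \<gamma> where "\<alpha> = l2inner h (E g)" and "\<beta> = l2inner g (E h)" and "\<gamma> = l2inner g (E g)"
  have "quad_form E (add_scaled h t g) = t * \<alpha> + cnj t * \<beta> + cnj t * t * \<gamma>" for t
    using quad_form_add_scaled[OF h g E_ell2[OF h] E_ell2[OF g] E_add_scaled] zero
    by (simp add: \<alpha>_def \<beta>_def \<gamma>_def E_def quad_form_def)
  moreover have "0 \<le> quad_form E (add_scaled h t g)" for t
    using \<open>op_le A B\<close> add_scaled_ell2[OF h g] unfolding op_le_iff quad_form_def E_def by blast
  ultimately have nonneg: "0 \<le> t * \<alpha> + cnj t * \<beta> + cnj t * t * \<gamma>" for t by metis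
  have "0 \<le> Re (\<alpha> + \<beta>) * r + Re \<gamma> * r^2" "0 \<le> Im (\<alpha> + \<beta>) * r + Im \<gamma> * r^2"
    "0 \<le> (- Im (\<alpha> - \<beta>)) * r + Re \<gamma> * r^2" "0 \<le> Re (\<alpha> - \<beta>) * r + Im \<gamma> * r^2" for r :: real
    using nonneg[of "complex_of_real r"] nonneg[of "\<i> * complex_of_real r"]
    by (simp_all add: less_eq_complex_def power2_eq_square algebra_simps)
  note quadratic = this
  have "\<beta> = 0"
    using linear_coeff_zero_if_quadratic_nonneg[OF quadratic(1)] linear_coeff_zero_if_quadratic_nonneg[OF quadratic(2)]
      linear_coeff_zero_if_quadratic_nonneg[OF quadratic(3)] linear_coeff_zero_if_quadratic_nonneg[OF quadratic(4)]
    by (simp add: complex_eq_iff)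
  then show ?thesis by (simp add: \<beta>_def E_def)
qed

lemma op_le_finite_perturbation:
  assumes S: "bounded_op S" and T: "bounded_op T" and G: "finite G" and "c \<ge> 0"
    and off: "\<And>f x. f \<in> ell2 \<Longrightarrow> x \<notin> G \<Longrightarrow> T f x - S f x = complex_of_real c * f x"
    and on: "\<And>f. f \<in> ell2 \<Longrightarrow> 0 \<le> (\<Sum>x\<in>G. cnj (f x) * (T f x - S f x))"
  shows "op_le S T"
  unfolding op_le_iff
proof
  fix f :: "'a vec" assume f: "f \<in> ell2"
  define d where "d = (\<lambda>x. T f x - S f x)"
  have d: "d \<in> ell2" unfolding d_def by (rule ell2_diff[OF bounded_op_ell2[OF T f] bounded_op_ell2[OF S f]])
  have "0 \<le> infsum (\<lambda>x. cnj (f x) * d x) (-G)"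
  proof (rule infsum_nonneg_complex)
    show "(\<lambda>x. cnj (f x) * d x) summable_on (-G)" by (rule inner_summable_on[OF f d])
    fix x assume "x \<in> -G"
    then have "d x = complex_of_real c * f x"
      using off[OF f] by (simp add: d_def)
    then show "0 \<le> cnj (f x) * d x"
      using \<open>c \<ge> 0\<close> by (simp add: less_eq_complex_def algebra_simps flip: power2_eq_square)
  qed
  moreover have "0 \<le> (\<Sum>x\<in>G. cnj (f x) * d x)" unfolding d_def by (rule on[OF f])
  ultimately show "0 \<le> l2inner f (\<lambda>x. T f x - S f x)"
    using l2inner_split[OF f d G] unfolding d_def by simp
qed

lemma norm_half_sum_sq: "2 * (cmod ((a + b) / 2))^2 \<le> (cmod a)^2 + (cmod b)^2"
proof -
  have "(cmod (a + b))^2 \<le> (cmod a + cmod b)^2"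
    by (simp add: power_mono norm_triangle_ineq)
  also have "\<dots> \<le> 2 * (cmod a)^2 + 2 * (cmod b)^2" by (rule square_sum_le)
  finally show ?thesis by (simp add: norm_divide power_divide)
qed

lemma cnj_mult_self_nonneg: "0 \<le> cnj a * a"
  by (simp add: less_eq_complex_def)

lemma pair_average_nonneg: "0 \<le> cnj a * (a + b) / 2 + cnj b * (a + b) / 2"
proof -
  have "cnj a * (a + b) / 2 + cnj b * (a + b) / 2 = cnj (a + b) * (a + b) / 2"
    by (simp add: field_simps)
  also have "0 \<le> \<dots>"
    using cnj_mult_self_nonneg[of "a + b"] unfolding less_eq_complex_def by simp
  finally show ?thesis .
qed

lemma pair_deviation_nonneg: "0 \<le> cnj a * (a - (a + b) / 2) + cnj b * (b - (a + b) / 2)"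
proof -
  have "cnj a * (a - (a + b) / 2) + cnj b * (b - (a + b) / 2) = cnj (a - b) * (a - b) / 2"
    by (simp add: field_simps)
  also have "0 \<le> \<dots>"
    using cnj_mult_self_nonneg[of "a - b"] unfolding less_eq_complex_def by simp
  finally show ?thesis .
qed

section \<open>Unbounded spaces: sequences of far-apart pairs\<close>

lemma propagation_leI:
  assumes "\<And>x y. T (delta y) x \<noteq> 0 \<Longrightarrow> dist x y < L"
  shows "propagation_le L T"
  unfolding propagation_le_def l2inner_delta using assms by force

locale far_pairs =
  fixes xs ys :: "nat \<Rightarrow> 'a::metric_space"
  assumes inj_xs: "inj xs" and inj_ys: "inj ys" and xs_ne_ys [simp]: "\<And>m n. xs m \<noteq> ys n"
    and far: "\<And>n. real n \<le> dist (xs n) (ys n)"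
begin

lemma ys_ne_xs [simp]: "ys n \<noteq> xs m"
  using xs_ne_ys by metis

lemma xs_eq_iff [simp]: "xs m = xs n \<longleftrightarrow> m = n"
  using inj_xs by (auto dest: injD)

lemma ys_eq_iff [simp]: "ys m = ys n \<longleftrightarrow> m = n"
  using inj_ys by (auto dest: injD)

definition pair_support :: "nat \<Rightarrow> 'a set" where
  "pair_support N = xs ` {..<N} \<union> ys ` {..<N}"

text \<open>\<^term>\<open>avg_upto N\<close> is \<open>\<Sum>\<^sub>n\<^sub><\<^sub>N P\<^sub>n\<close>, where \<open>P\<^sub>n\<close> projects onto \<open>\<delta>\<^sub>x\<^sub>n + \<delta>\<^sub>y\<^sub>n\<close>;
  \<^term>\<open>avg_at k\<close> is \<open>1 - P'\<^sub>k\<close>, where \<open>P'\<^sub>k\<close> projects onto \<open>\<delta>\<^sub>x\<^sub>k - \<delta>\<^sub>y\<^sub>k\<close>.\<close>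

definition avg_upto :: "nat \<Rightarrow> 'a op" where
  "avg_upto N f x = (\<Sum>n<N. if x = xs n \<or> x = ys n then (f (xs n) + f (ys n)) / 2 else 0)"

definition avg_at :: "nat \<Rightarrow> 'a op" where
  "avg_at k f x = (if x = xs k \<or> x = ys k then (f (xs k) + f (ys k)) / 2 else f x)"

lemma avg_upto_xs [simp]: "avg_upto N f (xs m) = (if m < N then (f (xs m) + f (ys m)) / 2 else 0)"
  unfolding avg_upto_def by simp

lemma avg_upto_ys [simp]: "avg_upto N f (ys m) = (if m < N then (f (xs m) + f (ys m)) / 2 else 0)"
  unfolding avg_upto_def by simp

lemma avg_upto_outside: "x \<notin> pair_support N \<Longrightarrow> avg_upto N f x = 0"
  unfolding avg_upto_def pair_support_def by (intro sum.neutral) auto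

lemma avg_at_xs [simp]: "avg_at k f (xs m) = (if m = k then (f (xs k) + f (ys k)) / 2 else f (xs m))"
  unfolding avg_at_def by auto

lemma avg_at_ys [simp]: "avg_at k f (ys m) = (if m = k then (f (xs k) + f (ys k)) / 2 else f (ys m))"
  unfolding avg_at_def by auto

lemma avg_at_outside: "x \<noteq> xs k \<Longrightarrow> x \<noteq> ys k \<Longrightarrow> avg_at k f x = f x"
  unfolding avg_at_def by auto

lemma finite_pair_support [simp]: "finite (pair_support N)"
  unfolding pair_support_def by simp

lemma pair_support_mono: "N \<le> M \<Longrightarrow> pair_support N \<subseteq> pair_support M"
  unfolding pair_support_def by auto

lemma sum_pair_support: "(\<Sum>x\<in>pair_support N. \<phi> x) = (\<Sum>n<N. \<phi> (xs n) + \<phi> (ys n))"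
proof -
  have "(\<Sum>x\<in>pair_support N. \<phi> x) = (\<Sum>x\<in>xs ` {..<N}. \<phi> x) + (\<Sum>x\<in>ys ` {..<N}. \<phi> x)"
    unfolding pair_support_def by (rule sum.union_disjoint) auto
  also have "\<dots> = (\<Sum>n<N. \<phi> (xs n)) + (\<Sum>n<N. \<phi> (ys n))"
    using inj_xs inj_ys by (simp add: sum.reindex inj_on_def)
  finally show ?thesis by (simp add: sum.distrib)
qed

lemma point_cases:
  obtains m where "x = xs m" | m where "x = ys m" | "\<forall>m. x \<noteq> xs m \<and> x \<noteq> ys m"
  by blast

lemma avg_upto_off_pairs: "\<forall>m. x \<noteq> xs m \<and> x \<noteq> ys m \<Longrightarrow> avg_upto N f x = 0"
  unfolding avg_upto_def by simp

lemma avg_upto_lincomb: "avg_upto N (\<lambda>x. a * f x + b * g x) = (\<lambda>x. a * avg_upto N f x + b * avg_upto N g x)"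
proof
  fix x
  show "avg_upto N (\<lambda>x. a * f x + b * g x) x = a * avg_upto N f x + b * avg_upto N g x"
    by (cases x rule: point_cases) (auto simp: field_simps avg_upto_off_pairs)
qed

lemma avg_at_lincomb: "avg_at k (\<lambda>x. a * f x + b * g x) = (\<lambda>x. a * avg_at k f x + b * avg_at k g x)"
  unfolding avg_at_def by (auto simp: field_simps)

lemma avg_upto_norm:
  assumes "f \<in> ell2"
  shows "avg_upto N f \<in> ell2" "l2norm (avg_upto N f) \<le> l2norm f"
proof -
  have "(\<Sum>x\<in>pair_support N. (cmod (avg_upto N f x))^2) \<le> (\<Sum>x\<in>pair_support N. (cmod (f x))^2)"
    unfolding sum_pair_support using norm_half_sum_sq by (intro sum_mono) simp
  moreover have "cmod (avg_upto N f x) \<le> cmod (f x)" if "x \<notin> pair_support N" for x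
    using that by (simp add: avg_upto_outside)
  ultimately show "avg_upto N f \<in> ell2" "l2norm (avg_upto N f) \<le> l2norm f"
    using l2norm_le_by_comparison[OF assms finite_pair_support] by blast+
qed

lemma avg_at_norm:
  assumes "f \<in> ell2"
  shows "avg_at k f \<in> ell2" "l2norm (avg_at k f) \<le> l2norm f"
proof -
  have "(\<Sum>x\<in>{xs k, ys k}. (cmod (avg_at k f x))^2) \<le> (\<Sum>x\<in>{xs k, ys k}. (cmod (f x))^2)"
    using norm_half_sum_sq[of "f (xs k)" "f (ys k)"] by simp
  moreover have "cmod (avg_at k f x) \<le> cmod (f x)" if "x \<notin> {xs k, ys k}" for x
    using that by (simp add: avg_at_outside)
  ultimately show "avg_at k f \<in> ell2" "l2norm (avg_at k f) \<le> l2norm f"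
    using l2norm_le_by_comparison[OF assms, of "{xs k, ys k}"] by blast+
qed

lemma avg_upto_bounded: "bounded_op (avg_upto N)"
  unfolding bounded_op_def using avg_upto_norm avg_upto_lincomb
  by (metis (no_types, lifting) mult_1)

lemma avg_at_bounded: "bounded_op (avg_at k)"
  unfolding bounded_op_def using avg_at_norm avg_at_lincomb
  by (metis (no_types, lifting) mult_1)

lemma avg_upto_self_adjoint: "self_adjoint_op (avg_upto N)"
  unfolding self_adjoint_op_def
proof (intro conjI avg_upto_bounded ballI)
  fix f g :: "'a vec"
  have "l2inner (avg_upto N f) g = (\<Sum>x\<in>pair_support N. cnj (avg_upto N f x) * g x)"
    by (rule l2inner_finite_support) (auto simp: avg_upto_outside)
  also have "\<dots> = (\<Sum>x\<in>pair_support N. cnj (f x) * avg_upto N g x)"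
    unfolding sum_pair_support by (rule sum.cong) (auto simp: field_simps)
  also have "\<dots> = l2inner f (avg_upto N g)"
    by (rule l2inner_finite_support[symmetric]) (auto simp: avg_upto_outside)
  finally show "l2inner (avg_upto N f) g = l2inner f (avg_upto N g)" .
qed

lemma avg_at_self_adjoint: "self_adjoint_op (avg_at k)"
  unfolding self_adjoint_op_def
proof (intro conjI avg_at_bounded ballI)
  fix f g :: "'a vec" assume f: "f \<in> ell2" and g: "g \<in> ell2"
  let ?P = "{xs k, ys k}"
  have on_pair: "(\<Sum>x\<in>?P. cnj (avg_at k f x) * g x) = (\<Sum>x\<in>?P. cnj (f x) * avg_at k g x)"
    by (simp add: field_simps)
  have off_pair: "infsum (\<lambda>x. cnj (avg_at k f x) * g x) (-?P) = infsum (\<lambda>x. cnj (f x) * avg_at k g x) (-?P)"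
    by (rule infsum_cong) (simp add: avg_at_outside)
  have "l2inner (avg_at k f) g = (\<Sum>x\<in>?P. cnj (avg_at k f x) * g x) + infsum (\<lambda>x. cnj (avg_at k f x) * g x) (-?P)"
    by (rule l2inner_split[OF avg_at_norm(1)[OF f] g]) simp
  also have "\<dots> = (\<Sum>x\<in>?P. cnj (f x) * avg_at k g x) + infsum (\<lambda>x. cnj (f x) * avg_at k g x) (-?P)"
    by (simp only: on_pair off_pair)
  also have "\<dots> = l2inner f (avg_at k g)"
    by (rule l2inner_split[OF f avg_at_norm(1)[OF g], symmetric]) simp
  finally show "l2inner (avg_at k f) g = l2inner f (avg_at k g)" .
qed

lemma avg_upto_uniform_roe: "avg_upto N \<in> uniform_roe"
proof (rule finite_propagation_in_uniform_roe[OF avg_upto_bounded propagation_leI])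
  fix x y assume "avg_upto N (delta y) x \<noteq> 0"
  then obtain n where "n < N" "x = xs n \<or> x = ys n" "y = xs n \<or> y = ys n"
    unfolding avg_upto_def delta_def by (auto elim: sum.not_neutral_contains_not_neutral split: if_splits)
  then have "dist x y \<le> dist (xs n) (ys n)" by (auto simp: dist_commute)
  also have "\<dots> \<le> (\<Sum>m<N. dist (xs m) (ys m))"
    using \<open>n < N\<close> by (intro member_le_sum) auto
  finally show "dist x y < 1 + (\<Sum>m<N. dist (xs m) (ys m))" by simp
qed

lemma avg_at_uniform_roe: "avg_at k \<in> uniform_roe"
proof (rule finite_propagation_in_uniform_roe[OF avg_at_bounded propagation_leI])
  fix x y assume "avg_at k (delta y) x \<noteq> 0"
  then have "x = y \<or> (x = xs k \<or> x = ys k) \<and> (y = xs k \<or> y = ys k)"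
    unfolding avg_at_def delta_def by (auto split: if_splits)
  then show "dist x y < 1 + dist (xs k) (ys k)" by (auto simp: dist_commute add_pos_nonneg)
qed

lemma avg_upto_mono: "N \<le> M \<Longrightarrow> op_le (avg_upto N) (avg_upto M)"
proof (rule op_le_finite_perturbation[OF avg_upto_bounded avg_upto_bounded finite_pair_support order_refl])
  fix f :: "'a vec" and x assume "N \<le> M" "x \<notin> pair_support M"
  moreover from this have "x \<notin> pair_support N" using pair_support_mono by blast
  ultimately show "avg_upto M f x - avg_upto N f x = complex_of_real 0 * f x"
    by (simp add: avg_upto_outside)
next
  fix f :: "'a vec"
  show "0 \<le> (\<Sum>x\<in>pair_support M. cnj (f x) * (avg_upto M f x - avg_upto N f x))"
    unfolding sum_pair_support
    by (intro sum_nonneg) (simp add: pair_average_nonneg)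
qed

lemma avg_upto_le_avg_at: "op_le (avg_upto N) (avg_at k)"
proof (rule op_le_finite_perturbation[OF avg_upto_bounded avg_at_bounded finite_pair_support[of "N + Suc k"], of 1])
  fix f :: "'a vec" and x assume "x \<notin> pair_support (N + Suc k)"
  then have "x \<notin> pair_support N" "x \<noteq> xs k" "x \<noteq> ys k"
    using pair_support_mono[of N "N + Suc k"] unfolding pair_support_def by auto
  then show "avg_at k f x - avg_upto N f x = complex_of_real 1 * f x"
    by (simp add: avg_upto_outside avg_at_outside)
next
  fix f :: "'a vec"
  show "0 \<le> (\<Sum>x\<in>pair_support (N + Suc k). cnj (f x) * (avg_at k f x - avg_upto N f x))"
    unfolding sum_pair_support
    by (intro sum_nonneg) (auto simp: pair_average_nonneg pair_deviation_nonneg cnj_mult_self_nonneg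
        simp flip: distrib_left intro: add_nonneg_nonneg)
qed simp

lemma lub_pair_entry:
  assumes L: "bounded_op L" and lower: "op_le (avg_upto (Suc k)) L" and upper: "op_le L (avg_at k)"
  shows "L (delta (ys k)) (xs k) = 1/2"
proof -
  let ?Q = "avg_upto (Suc k)" and ?U = "avg_at k"
  have entry: "L (add_scaled (delta (xs k)) s (delta (ys k))) (xs k) = (1 + s) / 2" for s
  proof -
    define h where "h = add_scaled (delta (xs k)) s (delta (ys k))"
    have h: "h \<in> ell2" unfolding h_def by (intro add_scaled_ell2 delta_ell2)
    have U_eq_Q: "?U h = ?Q h"
    proof
      fix x show "?U h x = ?Q h x"
        by (cases x rule: point_cases)
          (auto simp: h_def add_scaled_def delta_def avg_upto_off_pairs avg_at_outside)
    qed
    have Lh: "L h \<in> ell2" "?Q h \<in> ell2" "?U h \<in> ell2"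
      using bounded_op_ell2[OF L h] bounded_op_ell2[OF avg_upto_bounded h] bounded_op_ell2[OF avg_at_bounded h]
      by auto
    define X Y where "X = l2inner h (\<lambda>x. L h x - ?Q h x)" and "Y = l2inner h (\<lambda>x. ?U h x - L h x)"
    have "0 \<le> X" "0 \<le> Y" using lower upper h unfolding X_def Y_def op_le_iff by blast+
    moreover have "X + Y = 0"
      unfolding X_def Y_def using Lh h by (simp add: l2inner_diff_right U_eq_Q)
    ultimately have "X = 0" by (simp add: add_nonneg_eq_0_iff)
    then have "l2inner (delta (xs k)) (\<lambda>x. L h x - ?Q h x) = 0"
      unfolding X_def by (intro op_le_kernel[OF avg_upto_bounded L lower h delta_ell2])
    then have "L h (xs k) = ?Q h (xs k)" by (simp add: l2inner_delta)
    also have "\<dots> = (1 + s) / 2" by (simp add: h_def add_scaled_def delta_def)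
    finally show ?thesis by (simp add: h_def)
  qed
  have "L (add_scaled (delta (xs k)) s (delta (ys k))) = add_scaled (L (delta (xs k))) s (L (delta (ys k)))" for s
    by (rule bounded_op_add_scaled[OF L delta_ell2 delta_ell2])
  then have "L (delta (xs k)) (xs k) + s * L (delta (ys k)) (xs k) = (1 + s) / 2" for s
    using entry[of s] by (simp add: add_scaled_def)
  from this[of 1] this[of "-1"] show ?thesis by (simp add: field_simps)
qed

lemma not_monotone_complete_uniform_roe: "\<not> monotone_complete (uniform_roe :: 'a op set)"
proof
  assume mc: "monotone_complete (uniform_roe :: 'a op set)"
  have norm_le: "l2norm (avg_upto n f) \<le> 1 * l2norm f" if "f \<in> ell2" for n f
    using avg_upto_norm(2)[OF that] by simp
  obtain L where "L \<in> uniform_roe" "self_adjoint_op L" and lower: "\<And>n. op_le (avg_upto n) L"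
    and least: "\<And>U. U \<in> uniform_roe \<Longrightarrow> self_adjoint_op U \<Longrightarrow> \<forall>n. op_le (avg_upto n) U \<Longrightarrow> op_le L U"
    using monotone_complete_incseq_lub[where N = avg_upto, OF mc avg_upto_uniform_roe avg_upto_self_adjoint avg_upto_mono norm_le]
    by blast
  have "op_le L (avg_at k)" for k
    by (intro least avg_at_uniform_roe avg_at_self_adjoint allI avg_upto_le_avg_at)
  then have half: "L (delta (ys k)) (xs k) = 1/2" for k
    by (rule lub_pair_entry[OF self_adjoint_op_bounded[OF \<open>self_adjoint_op L\<close>] lower])
  obtain R where R: "\<And>x y. R \<le> dist x y \<Longrightarrow> cmod (L (delta y) x) \<le> 1/4"
    using uniform_roe_far_entries_small[OF \<open>L \<in> uniform_roe\<close>, of "1/4"] by auto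
  obtain n :: nat where "R \<le> real n" using real_arch_simple by blast
  with far[of n] have "cmod (L (delta (ys n)) (xs n)) \<le> 1/4" by (intro R) simp
  then show False unfolding half by simp
qed

end

lemma unbounded_imp_far_pairs:
  assumes "\<not> bounded (UNIV :: 'a::metric_space set)"
  shows "\<exists>xs ys :: nat \<Rightarrow> 'a. far_pairs xs ys"
proof -
  fix a :: 'a
  have "\<exists>z. R < dist a z" for R
    using assms unfolding bounded_any_center[of _ a] by (auto simp: not_le)
  then obtain far_from :: "real \<Rightarrow> 'a" where far_from: "\<And>R. R < dist a (far_from R)"
    by metis
  txt \<open>Each point is farther from a than its predecessor by more than its index, so the
    reverse triangle inequality separates \<open>p m\<close> from all earlier points by more than m.\<close>
  define p where "p = rec_nat (far_from 0) (\<lambda>m q. far_from (dist a q + real (Suc m)))"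
  have p_Suc: "dist a (p m) + real (Suc m) < dist a (p (Suc m))" for m
    unfolding p_def using far_from by simp
  have dist_mono: "incseq (\<lambda>m. dist a (p m))"
  proof (rule incseq_SucI)
    show "dist a (p m) \<le> dist a (p (Suc m))" for m
      using p_Suc[of m] of_nat_0_le_iff[of "Suc m"] by linarith
  qed
  have p_far: "real m < dist (p m) (p k)" if "k < m" for k m
  proof -
    obtain l where m: "m = Suc l" and "k \<le> l" using \<open>k < m\<close> by (cases m) auto
    have "dist a (p k) \<le> dist a (p l)" using incseqD[OF dist_mono \<open>k \<le> l\<close>] by simp
    then have "real m < dist a (p m) - dist a (p k)" using p_Suc[of l] m by simp
    also have "\<dots> \<le> dist (p m) (p k)" using dist_triangle[of a "p m" "p k"] by (simp add: dist_commute)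
    finally show ?thesis .
  qed
  have p_inj: "p m = p k \<longleftrightarrow> m = k" for m k
    using p_far[of k m] p_far[of m k] by (cases m k rule: linorder_cases) auto
  have "far_pairs (\<lambda>n. p (2 * n)) (\<lambda>n. p (2 * n + 1))"
  proof
    show "inj (\<lambda>n. p (2 * n))" "inj (\<lambda>n. p (2 * n + 1))" by (auto intro: injI simp: p_inj)
    show "p (2 * m) \<noteq> p (2 * n + 1)" for m n by (simp add: p_inj) presburger
    show "real n \<le> dist (p (2 * n)) (p (2 * n + 1))" for n
      using p_far[of "2 * n" "2 * n + 1"] by (simp add: dist_commute)
  qed
  then show ?thesis by blast
qed

theorem mainTheorem2:
  assumes discrete: "\<forall>x::'a::{metric_space,countable}. open {x}"
  shows "bounded (UNIV :: 'a set) \<longleftrightarrow> monotone_complete (uniform_roe :: 'a op set)"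
proof
  assume "bounded (UNIV :: 'a set)"
  then show "monotone_complete (uniform_roe :: 'a op set)"
    by (simp add: uniform_roe_eq_bounded_ops monotone_complete_bounded_ops)
next
  assume mc: "monotone_complete (uniform_roe :: 'a op set)"
  show "bounded (UNIV :: 'a set)"
  proof (rule ccontr)
    assume "\<not> bounded (UNIV :: 'a set)"
    then obtain xs ys :: "nat \<Rightarrow> 'a" where "far_pairs xs ys"
      using unbounded_imp_far_pairs by blast
    then show False using far_pairs.not_monotone_complete_uniform_roe mc by blast
  qed
qed

end
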